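(* Let $T$ be a singular weighted tree with adjacency matrix $A$. Then $A$ and $A^{\#}$ have the same zero–nonzero pattern if and only if $T$ is a weighted star.
   Context: A weighted tree has a nonzero real weight on each edge; its adjacency matrix $A$ has $(i,j)$ entry equal to the weight of edge $v_iv_j$, or $0$ if no edge; $T$ is singular if $A$ is singular. $A^{\#}$ is the group inverse of $A$, the unique $X$ with $AXA=A$, $XAX=X$, $AX=XA$. *)

theory Defs
  imports "Jordan_Normal_Form.Determinant"
begin

text \<open>Vertices of a weighted tree on n vertices are 0..n-1; the tree is given by
its (real, symmetric) adjacency matrix A: the entry A(i,j) is the (nonzero) weight of
edge {i,j}, or 0 if there is no such edge.\<close>

definition adj :: "nat \<Rightarrow> real mat \<Rightarrow> nat \<Rightarrow> nat \<Rightarrow> bool" where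
  "adj n A i j \<longleftrightarrow> i < n \<and> j < n \<and> i \<noteq> j \<and> A $$ (i, j) \<noteq> 0"

definition graph_connected :: "nat \<Rightarrow> real mat \<Rightarrow> bool" where
  "graph_connected n A \<longleftrightarrow> (\<forall>i<n. \<forall>j<n. (adj n A)\<^sup>*\<^sup>* i j)"

definition is_cycle :: "nat \<Rightarrow> real mat \<Rightarrow> nat list \<Rightarrow> bool" where
  "is_cycle n A vs \<longleftrightarrow> length vs \<ge> 3 \<and> distinct vs \<and>
     (\<forall>k. Suc k < length vs \<longrightarrow> adj n A (vs ! k) (vs ! Suc k)) \<and>
     adj n A (last vs) (hd vs)"

definition graph_acyclic :: "nat \<Rightarrow> real mat \<Rightarrow> bool" where
  "graph_acyclic n A \<longleftrightarrow> (\<nexists>vs. is_cycle n A vs)"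

definition weighted_tree :: "nat \<Rightarrow> real mat \<Rightarrow> bool" where
  "weighted_tree n A \<longleftrightarrow> n \<ge> 1 \<and> A \<in> carrier_mat n n \<and>
     (\<forall>i<n. \<forall>j<n. A $$ (i, j) = A $$ (j, i)) \<and> (\<forall>i<n. A $$ (i, i) = 0) \<and>
     graph_connected n A \<and> graph_acyclic n A"

definition weighted_star :: "nat \<Rightarrow> real mat \<Rightarrow> bool" where
  "weighted_star n A \<longleftrightarrow> weighted_tree n A \<and> (\<exists>c<n. \<forall>j<n. j \<noteq> c \<longrightarrow> adj n A c j)"

definition is_group_inverse :: "nat \<Rightarrow> real mat \<Rightarrow> real mat \<Rightarrow> bool" where
  "is_group_inverse n A X \<longleftrightarrow> X \<in> carrier_mat n n \<and>
     A * X * A = A \<and> X * A * X = X \<and> A * X = X * A"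

definition group_inverse :: "nat \<Rightarrow> real mat \<Rightarrow> real mat" where
  "group_inverse n A = (THE X. is_group_inverse n A X)"

definition same_pattern :: "nat \<Rightarrow> real mat \<Rightarrow> real mat \<Rightarrow> bool" where
  "same_pattern n A B \<longleftrightarrow> (\<forall>i<n. \<forall>j<n. (A $$ (i, j) = 0) \<longleftrightarrow> (B $$ (i, j) = 0))"

end

theory Submission
  imports Defs
begin

(* The adjacency matrix A of a weighted tree is real symmetric, so A^2 x = 0 forces A x = 0.  A linear
   dependence among the powers of A, divided by the power of A at its lowest term, therefore gives
   A = A^2 Z, and then Z^T A Z is the group inverse.  If T is a star with centre c, then A^3 = s A with
   s the sum of the squared weights, so A^# = A / s has the pattern of A.  If T is not a star, it
   contains a path a b c d; as this is the only walk of length three from a to d, any X with the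
   pattern of A has (A X A)_ad = A_ab X_bc A_cd <> 0 = A_ad, so A X A <> A. *)

lemma index_mult_mat_sum:
  assumes "A \<in> carrier_mat n n" "B \<in> carrier_mat n n" "i < n" "j < n"
  shows "(A * B) $$ (i, j) = (\<Sum>k<n. A $$ (i, k) * B $$ (k, j))"
  using assms by (simp add: scalar_prod_def lessThan_atLeast0)

lemma sum_sum_eq_single:
  fixes f :: "'a \<Rightarrow> 'b \<Rightarrow> 'c :: comm_monoid_add"
  assumes "finite K" "finite L" "b \<in> K" "c \<in> L"
    and "\<And>k l. k \<in> K \<Longrightarrow> l \<in> L \<Longrightarrow> f k l \<noteq> 0 \<Longrightarrow> k = b \<and> l = c"
  shows "(\<Sum>l\<in>L. \<Sum>k\<in>K. f k l) = f b c"
proof -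
  have zero_cols: "\<forall>l\<in>L - {c}. (\<Sum>k\<in>K. f k l) = 0"
    using assms(5) by (blast intro: sum.neutral)
  have zero_row: "\<forall>k\<in>K - {b}. f k c = 0"
    using assms(4,5) by blast
  have "(\<Sum>l\<in>L. \<Sum>k\<in>K. f k l) = (\<Sum>l\<in>{c}. \<Sum>k\<in>K. f k l)"
    by (rule sum.mono_neutral_right[OF assms(2) _ zero_cols]) (use assms(4) in simp)
  also have "\<dots> = (\<Sum>k\<in>K. f k c)" by simp
  also have "\<dots> = (\<Sum>k\<in>{b}. f k c)"
    by (rule sum.mono_neutral_right[OF assms(1) _ zero_row]) (use assms(3) in simp)
  finally show ?thesis by simp
qed

definition mat_lincomb ::
    "nat \<Rightarrow> ('b \<Rightarrow> 'a :: comm_ring_1) \<Rightarrow> 'b set \<Rightarrow> ('b \<Rightarrow> 'a mat) \<Rightarrow> 'a mat" where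
  "mat_lincomb n c K F = mat n n (\<lambda>(i, j). \<Sum>k\<in>K. c k * F k $$ (i, j))"

lemma mat_lincomb_carrier [simp]: "mat_lincomb n c K F \<in> carrier_mat n n"
  and dim_mat_lincomb [simp]: "dim_row (mat_lincomb n c K F) = n" "dim_col (mat_lincomb n c K F) = n"
  unfolding mat_lincomb_def by auto

lemma index_mat_lincomb [simp]:
  "i < n \<Longrightarrow> j < n \<Longrightarrow> mat_lincomb n c K F $$ (i, j) = (\<Sum>k\<in>K. c k * F k $$ (i, j))"
  unfolding mat_lincomb_def by auto

lemma mat_lincomb_cong:
  "(\<And>k. k \<in> K \<Longrightarrow> F k = G k) \<Longrightarrow> mat_lincomb n c K F = mat_lincomb n c K G"
  unfolding mat_lincomb_def by (auto intro!: cong_mat sum.cong)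

lemma mult_mat_lincomb:
  assumes M: "M \<in> carrier_mat n n" and F: "\<And>k. k \<in> K \<Longrightarrow> F k \<in> carrier_mat n n"
  shows "M * mat_lincomb n c K F = mat_lincomb n c K (\<lambda>k. M * F k)"
proof (rule eq_matI)
  fix i j assume "i < dim_row (mat_lincomb n c K (\<lambda>k. M * F k))" "j < dim_col (mat_lincomb n c K (\<lambda>k. M * F k))"
  then have i: "i < n" and j: "j < n" by auto
  have "(M * mat_lincomb n c K F) $$ (i, j) = (\<Sum>l<n. M $$ (i, l) * (\<Sum>k\<in>K. c k * F k $$ (l, j)))"
    using index_mult_mat_sum[OF M mat_lincomb_carrier i j] i j by simp
  also have "\<dots> = (\<Sum>k\<in>K. c k * (\<Sum>l<n. M $$ (i, l) * F k $$ (l, j)))"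
    by (simp add: sum_distrib_left mult_ac sum.swap[of _ K])
  also have "\<dots> = mat_lincomb n c K (\<lambda>k. M * F k) $$ (i, j)"
    using index_mult_mat_sum[OF M F i j] i j by simp
  finally show "(M * mat_lincomb n c K F) $$ (i, j) = mat_lincomb n c K (\<lambda>k. M * F k) $$ (i, j)" .
qed (use M in auto)

lemma pow_mat_add:
  assumes "A \<in> carrier_mat n n"
  shows "A ^\<^sub>m k * A ^\<^sub>m l = A ^\<^sub>m (k + l)"
proof -
  interpret semiring "ring_mat TYPE('a) n ()" by (rule semiring_mat)
  have "A ^\<^sub>m m = A [^]\<^bsub>ring_mat TYPE('a) n ()\<^esub> m" for m
    by (rule pow_mat_ring_pow[OF assms])
  then show ?thesis
    using assms nat_pow_mult[of A k l] by (simp add: ring_mat_simps)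
qed

lemma pow_mat_Suc_left:
  assumes "A \<in> carrier_mat n n"
  shows "A ^\<^sub>m Suc k = A * A ^\<^sub>m k"
  using pow_mat_add[OF assms, of 1 k] assms by simp

(* The n^2 + 1 powers, flattened into the columns of a square matrix padded by a zero row, are
   dependent because that matrix is singular. *)
lemma mat_powers_linear_dependent:
  fixes A :: "'a :: field mat"
  assumes A: "A \<in> carrier_mat n n"
  obtains c :: "nat \<Rightarrow> 'a" where "\<exists>k\<le>n * n. c k \<noteq> 0"
    and "mat_lincomb n c {..n * n} (\<lambda>k. A ^\<^sub>m k) = 0\<^sub>m n n"
proof -
  define N where "N = n * n"
  define M :: "'a mat" where
    "M = mat (Suc N) (Suc N) (\<lambda>(r, k). if r < N then (A ^\<^sub>m k) $$ (r div n, r mod n) else 0)"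
  have M: "M \<in> carrier_mat (Suc N) (Suc N)" unfolding M_def by auto
  have "transpose_mat M *\<^sub>v unit_vec (Suc N) N = 0\<^sub>v (Suc N)"
    unfolding M_def by (intro eq_vecI) (auto simp: scalar_prod_def unit_vec_def)
  moreover have "unit_vec (Suc N) N \<noteq> (0\<^sub>v (Suc N) :: 'a vec)"
    by (metis index_unit_vec(1) index_zero_vec(1) lessI zero_neq_one)
  ultimately have "det (transpose_mat M) = 0"
    using M by (subst det_0_iff_vec_prod_zero_field[of _ "Suc N"]) (auto intro!: exI[of _ "unit_vec (Suc N) N"])
  then obtain v where v: "v \<in> carrier_vec (Suc N)" "v \<noteq> 0\<^sub>v (Suc N)" "M *\<^sub>v v = 0\<^sub>v (Suc N)"
    using det_0_iff_vec_prod_zero_field[OF M] det_transpose[OF M] by auto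
  have "\<exists>k\<le>N. v $ k \<noteq> 0"
    using v(1,2) by (metis eq_vecI carrier_vecD index_zero_vec less_Suc_eq_le)
  moreover have "mat_lincomb n (\<lambda>k. v $ k) {..N} (\<lambda>k. A ^\<^sub>m k) = 0\<^sub>m n n"
  proof (rule eq_matI)
    fix i j assume "i < dim_row (0\<^sub>m n n :: 'a mat)" "j < dim_col (0\<^sub>m n n :: 'a mat)"
    then have i: "i < n" and j: "j < n" by auto
    define r where "r = i * n + j"
    have "i * n + j < Suc i * n" using j by simp
    also have "\<dots> \<le> n * n" using i by (intro mult_le_mono1) simp
    finally have "i * n + j < n * n" .
    then have r: "r < N" "r div n = i" "r mod n = j" using j unfolding r_def N_def by auto
    have "0 = (M *\<^sub>v v) $ r" using v(3) r by simp
    also have "\<dots> = (\<Sum>k\<le>N. v $ k * (A ^\<^sub>m k) $$ (i, j))"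
      using M v(1) r unfolding M_def
      by (auto simp: scalar_prod_def mult.commute lessThan_Suc_atMost[symmetric] lessThan_atLeast0 intro!: sum.cong)
    finally show "mat_lincomb n (\<lambda>k. v $ k) {..N} (\<lambda>k. A ^\<^sub>m k) $$ (i, j) = 0\<^sub>m n n $$ (i, j)"
      using i j by simp
  qed auto
  ultimately show ?thesis using that unfolding N_def by blast
qed

(* The diagonal entries of (A C)^T (A C) = C^T A^2 C are sums of squares of the entries of A C. *)
lemma sym_mat_mult_self_eq_0:
  fixes A C :: "'a :: linordered_idom mat"
  assumes A: "A \<in> carrier_mat n n" and C: "C \<in> carrier_mat n n"
    and sym: "transpose_mat A = A" and AAC: "A * (A * C) = 0\<^sub>m n n"
  shows "A * C = 0\<^sub>m n n"
proof -
  let ?M = "A * C"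
  have M: "?M \<in> carrier_mat n n" using A C by simp
  have "transpose_mat ?M * ?M = transpose_mat C * (A * (A * C))"
    using A C sym by (simp add: transpose_mult[OF A C] assoc_mult_mat[of "transpose_mat C" n n A n "A * C" n])
  then have MM: "transpose_mat ?M * ?M = 0\<^sub>m n n" using AAC C by simp
  show ?thesis
  proof (rule eq_matI)
    fix i j assume "i < dim_row (0\<^sub>m n n :: 'a mat)" "j < dim_col (0\<^sub>m n n :: 'a mat)"
    then have i: "i < n" and j: "j < n" by auto
    have "(\<Sum>l<n. ?M $$ (l, j) * ?M $$ (l, j)) = (transpose_mat ?M * ?M) $$ (j, j)"
      using index_mult_mat_sum[of "transpose_mat ?M" n ?M j j] A C j by (auto intro!: sum.cong)
    then have "(\<Sum>l<n. ?M $$ (l, j) * ?M $$ (l, j)) = 0"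
      using MM j by simp
    then have "?M $$ (i, j) * ?M $$ (i, j) = 0"
      using i by (subst (asm) sum_nonneg_eq_0_iff) auto
    then show "?M $$ (i, j) = 0\<^sub>m n n $$ (i, j)" using i j by simp
  qed (use M in auto)
qed

lemma sym_mat_pow_mult_eq_0:
  fixes A :: "'a :: linordered_idom mat"
  assumes A: "A \<in> carrier_mat n n" and sym: "transpose_mat A = A"
  shows "C \<in> carrier_mat n n \<Longrightarrow> A ^\<^sub>m Suc k * C = 0\<^sub>m n n \<Longrightarrow> A * C = 0\<^sub>m n n"
proof (induction k arbitrary: C)
  case 0
  then show ?case using A by simp
next
  case (Suc k)
  have "A ^\<^sub>m Suc (Suc k) * C = A ^\<^sub>m Suc k * (A * C)"
    by (subst pow_mat.simps(2), rule assoc_mult_mat) (use A Suc.prems(1) in auto)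
  then have "A * (A * C) = 0\<^sub>m n n"
    using Suc A by simp
  then show ?case by (rule sym_mat_mult_self_eq_0[OF A Suc.prems(1) sym])
qed

lemma mat_powers_dependence_lowest_term:
  fixes A :: "'a :: field mat"
  assumes A: "A \<in> carrier_mat n n"
  obtains a m Q where "a \<noteq> 0" and "Q \<in> carrier_mat n n"
    and "A ^\<^sub>m m * (a \<cdot>\<^sub>m 1\<^sub>m n + A * Q) = 0\<^sub>m n n"
proof -
  obtain c k0 where "k0 \<le> n * n" "c k0 \<noteq> 0"
    and dep: "mat_lincomb n c {..n * n} (\<lambda>k. A ^\<^sub>m k) = 0\<^sub>m n n"
    using mat_powers_linear_dependent[OF A] by blast
  define m where "m = (LEAST k. c k \<noteq> 0)"
  have cm: "c m \<noteq> 0" unfolding m_def by (rule LeastI[of _ k0]) fact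
  have mN: "m \<le> n * n"
    unfolding m_def using Least_le[of _ k0] \<open>c k0 \<noteq> 0\<close> \<open>k0 \<le> n * n\<close> by fastforce
  have below: "c k = 0" if "k < m" for k using not_less_Least[of k] that unfolding m_def by blast
  define Q where "Q = mat_lincomb n c {Suc m..n * n} (\<lambda>k. A ^\<^sub>m (k - Suc m))"
  have Q: "Q \<in> carrier_mat n n" unfolding Q_def by simp
  have "A * A ^\<^sub>m (k - Suc m) = A ^\<^sub>m (k - m)" if "k \<in> {Suc m..n * n}" for k
  proof -
    have "k - m = Suc (k - Suc m)" using that by auto
    then show ?thesis by (simp only: pow_mat_Suc_left[OF A])
  qed
  then have AQ: "A * Q = mat_lincomb n c {Suc m..n * n} (\<lambda>k. A ^\<^sub>m (k - m))"
    unfolding Q_def using A by (simp add: mult_mat_lincomb) (rule mat_lincomb_cong, simp)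
  have "A ^\<^sub>m m * (c m \<cdot>\<^sub>m 1\<^sub>m n + A * Q) = mat_lincomb n c {..n * n} (\<lambda>k. A ^\<^sub>m k)"
  proof (rule eq_matI)
    fix i j assume "i < dim_row (mat_lincomb n c {..n * n} (\<lambda>k. A ^\<^sub>m k))"
      "j < dim_col (mat_lincomb n c {..n * n} (\<lambda>k. A ^\<^sub>m k))"
    then have i: "i < n" and j: "j < n" by auto
    have "A ^\<^sub>m m * (c m \<cdot>\<^sub>m 1\<^sub>m n + A * Q)
        = c m \<cdot>\<^sub>m A ^\<^sub>m m + mat_lincomb n c {Suc m..n * n} (\<lambda>k. A ^\<^sub>m m * A ^\<^sub>m (k - m))"
      using A by (simp add: AQ mult_add_distrib_mat[of "A ^\<^sub>m m" n n _ n]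
          mult_smult_distrib[of "A ^\<^sub>m m" n n "1\<^sub>m n" n] mult_mat_lincomb)
    then have "(A ^\<^sub>m m * (c m \<cdot>\<^sub>m 1\<^sub>m n + A * Q)) $$ (i, j)
        = c m * (A ^\<^sub>m m) $$ (i, j) + (\<Sum>k\<in>{Suc m..n * n}. c k * (A ^\<^sub>m k) $$ (i, j))"
      using A i j by (simp add: pow_mat_add)
    also have "\<dots> = (\<Sum>k\<in>{m..n * n}. c k * (A ^\<^sub>m k) $$ (i, j))"
      using mN by (simp add: Icc_eq_insert_lb_nat)
    also have "\<dots> = (\<Sum>k\<le>n * n. c k * (A ^\<^sub>m k) $$ (i, j))"
      by (rule sum.mono_neutral_left) (auto simp: below)
    finally show "(A ^\<^sub>m m * (c m \<cdot>\<^sub>m 1\<^sub>m n + A * Q)) $$ (i, j)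
        = mat_lincomb n c {..n * n} (\<lambda>k. A ^\<^sub>m k) $$ (i, j)"
      using i j by simp
  qed (use A Q in auto)
  then show ?thesis using that[OF cm Q] dep by simp
qed

lemma sym_mat_factor_through_square:
  fixes A :: "'a :: linordered_field mat"
  assumes A: "A \<in> carrier_mat n n" and sym: "transpose_mat A = A"
  obtains Z where "Z \<in> carrier_mat n n" and "A * (A * Z) = A"
proof -
  obtain a m Q where a: "a \<noteq> 0" and Q: "Q \<in> carrier_mat n n"
    and annihilate: "A ^\<^sub>m m * (a \<cdot>\<^sub>m 1\<^sub>m n + A * Q) = 0\<^sub>m n n"
    using mat_powers_dependence_lowest_term[OF A] .
  define B where "B = a \<cdot>\<^sub>m 1\<^sub>m n + A * Q"
  have B: "B \<in> carrier_mat n n" unfolding B_def using A Q by simp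
  have "A ^\<^sub>m Suc m * B = A * (A ^\<^sub>m m * B)"
    using A B by (simp only: pow_mat_Suc_left[OF A]) (simp add: assoc_mult_mat[of A n n "A ^\<^sub>m m" n B n])
  then have "A * B = 0\<^sub>m n n"
    using sym_mat_pow_mult_eq_0[OF A sym B] A annihilate unfolding B_def by simp
  then have sum0: "a \<cdot>\<^sub>m A + A * (A * Q) = 0\<^sub>m n n"
    unfolding B_def using A Q by (simp add: mult_add_distrib_mat[of A n n _ n] mult_smult_distrib[of A n n "1\<^sub>m n" n])
  show ?thesis
  proof (rule that)
    show "(- 1 / a) \<cdot>\<^sub>m Q \<in> carrier_mat n n" using Q by simp
    have "A * (A * ((- 1 / a) \<cdot>\<^sub>m Q)) = (- 1 / a) \<cdot>\<^sub>m (A * (A * Q))"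
      using A Q by (simp add: mult_smult_distrib[of A n n Q n] mult_smult_distrib[of A n n "A * Q" n])
    also have "\<dots> = A"
    proof (rule eq_matI)
      fix i j assume "i < dim_row A" "j < dim_col A"
      then show "((- 1 / a) \<cdot>\<^sub>m (A * (A * Q))) $$ (i, j) = A $$ (i, j)"
        using arg_cong[OF sum0, of "\<lambda>M. M $$ (i, j)"] A Q a by (simp add: field_simps)
    qed (use A Q in auto)
    finally show "A * (A * ((- 1 / a) \<cdot>\<^sub>m Q)) = A" .
  qed
qed

lemma is_group_inverse_unique:
  assumes A: "A \<in> carrier_mat n n" and X: "is_group_inverse n A X" and Y: "is_group_inverse n A Y"
  shows "X = Y"
proof -
  have Xc: "X \<in> carrier_mat n n" and AXA: "A * X * A = A" and XAX: "X * A * X = X" and AX: "A * X = X * A"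
    using X unfolding is_group_inverse_def by auto
  have Yc: "Y \<in> carrier_mat n n" and AYA: "A * Y * A = A" and YAY: "Y * A * Y = Y" and AY: "A * Y = Y * A"
    using Y unfolding is_group_inverse_def by auto
  note assoc = assoc_mult_mat[of _ n n _ n _ n]
  have "A * X = A * Y * A * X" by (simp only: AYA)
  also have "\<dots> = Y * A * (A * X)" using A Xc Yc by (simp add: AY assoc)
  also have "\<dots> = Y * A * (X * A)" by (simp only: AX)
  also have "\<dots> = Y * (A * X * A)" using A Xc Yc by (simp add: assoc)
  also have "\<dots> = A * Y" by (simp only: AXA AY)
  finally have AXY: "A * X = A * Y" .
  have "X = X * (A * X)" using XAX A Xc by (simp add: assoc)
  also have "\<dots> = X * A * Y" using A Xc Yc by (simp add: AXY assoc)
  also have "\<dots> = Y * A * Y" by (simp only: AX[symmetric] AXY AY)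
  also have "\<dots> = Y" by (rule YAY)
  finally show ?thesis .
qed

lemma group_inverse_eqI:
  assumes "A \<in> carrier_mat n n" and "is_group_inverse n A X"
  shows "group_inverse n A = X"
  unfolding group_inverse_def using assms is_group_inverse_unique by blast

(* Transposing A = A^2 Z gives A = Z^T A^2, whence A Z = Z^T A. *)
lemma is_group_inverse_of_square_factor:
  assumes A: "A \<in> carrier_mat n n" and Z: "Z \<in> carrier_mat n n"
    and sym: "transpose_mat A = A" and AAZ: "A * (A * Z) = A"
  shows "is_group_inverse n A (transpose_mat Z * A * Z)"
proof -
  define W where "W = transpose_mat Z"
  have W: "W \<in> carrier_mat n n" using Z unfolding W_def by simp
  note assoc = assoc_mult_mat[of _ n n _ n _ n]
  have "W * A * A = transpose_mat (A * (A * Z))"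
    using A Z sym unfolding W_def by (simp add: transpose_mult[of A n n "A * Z" n] transpose_mult[of A n n Z n])
  then have WAA: "W * A * A = A" by (simp only: AAZ sym)
  have "A * Z = W * A * A * Z" by (simp only: WAA)
  also have "\<dots> = W * A" using A W Z by (simp add: assoc AAZ)
  finally have AZ: "A * Z = W * A" .
  have AZA: "A * Z * A = A" by (simp only: AZ WAA)
  have "A * W * A = A * (A * Z)" using A W Z by (simp add: AZ assoc)
  then have AWA: "A * W * A = A" by (simp only: AAZ)
  have "A * (W * A * Z) = A * W * A * Z" using A W Z by (simp add: assoc)
  then have AX: "A * (W * A * Z) = A * Z" by (simp only: AWA)
  have "W * A * Z * A = W * (A * Z * A)" using A W Z by (simp add: assoc)
  also have "\<dots> = A * Z" by (simp only: AZA AZ[symmetric])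
  finally have XA: "W * A * Z * A = A * Z" .
  have "W * A * Z * A * (W * A * Z) = W * A * Z * (A * (W * A * Z))"
    using A W Z by (simp add: assoc)
  also have "\<dots> = W * (A * Z * A) * Z" using A W Z by (simp only: AX) (simp add: assoc)
  also have "\<dots> = W * A * Z" by (simp only: AZA)
  finally have XAX: "W * A * Z * A * (W * A * Z) = W * A * Z" .
  show ?thesis
    unfolding is_group_inverse_def W_def[symmetric]
    using A W Z AX XA XAX AZA by simp
qed

lemma is_group_inverse_group_inverse_sym:
  assumes A: "A \<in> carrier_mat n n" and sym: "transpose_mat A = A"
  shows "is_group_inverse n A (group_inverse n A)"
proof -
  obtain Z where "Z \<in> carrier_mat n n" "A * (A * Z) = A"
    using sym_mat_factor_through_square[OF A sym] .
  then have "is_group_inverse n A (transpose_mat Z * A * Z)"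
    using is_group_inverse_of_square_factor A sym by blast
  then show ?thesis using group_inverse_eqI[OF A] by simp
qed

lemma sym_mat_cube_eq_0:
  fixes A :: "'a :: linordered_idom mat"
  assumes A: "A \<in> carrier_mat n n" and sym: "transpose_mat A = A" and "A * A * A = 0\<^sub>m n n"
  shows "A = 0\<^sub>m n n"
proof -
  have "A ^\<^sub>m Suc (Suc (Suc 0)) * 1\<^sub>m n = 0\<^sub>m n n" using assms by simp
  then show ?thesis using sym_mat_pow_mult_eq_0[OF A sym, of "1\<^sub>m n" "Suc (Suc 0)"] A by simp
qed

lemma group_inverse_of_cube_smult:
  fixes A :: "real mat"
  assumes A: "A \<in> carrier_mat n n" and sym: "transpose_mat A = A" and cube: "A * A * A = s \<cdot>\<^sub>m A"
  shows "group_inverse n A = (1 / s) \<cdot>\<^sub>m A"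
proof (cases "s = 0")
  case True
  then have "A * A * A = 0\<^sub>m n n" using cube A by (auto intro!: eq_matI)
  then have "A = 0\<^sub>m n n" by (rule sym_mat_cube_eq_0[OF A sym])
  then show ?thesis
    using group_inverse_eqI[of "0\<^sub>m n n" n "0\<^sub>m n n"] unfolding is_group_inverse_def by simp
next
  case False
  have "A * ((1 / s) \<cdot>\<^sub>m A) * A = (1 / s) \<cdot>\<^sub>m (A * A * A)"
    using A by (simp add: mult_smult_distrib[of A n n A n] mult_smult_assoc_mat[of "A * A" n n A n])
  also have "\<dots> = A" using cube False A by (auto intro!: eq_matI)
  finally have AXA: "A * ((1 / s) \<cdot>\<^sub>m A) * A = A" .
  have "(1 / s) \<cdot>\<^sub>m A * A * ((1 / s) \<cdot>\<^sub>m A) = (1 / s) \<cdot>\<^sub>m ((1 / s) \<cdot>\<^sub>m (A * A * A))"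
    using A by (simp add: mult_smult_assoc_mat[of A n n A n] mult_smult_assoc_mat[of "A * A" n n _ n]
        mult_smult_distrib[of "A * A" n n A n] del: assoc_mult_mat)
  also have "\<dots> = (1 / s) \<cdot>\<^sub>m A" using cube False A by (auto intro!: eq_matI)
  finally have XAX: "(1 / s) \<cdot>\<^sub>m A * A * ((1 / s) \<cdot>\<^sub>m A) = (1 / s) \<cdot>\<^sub>m A" .
  have "A * ((1 / s) \<cdot>\<^sub>m A) = (1 / s) \<cdot>\<^sub>m A * A"
    using A by (simp add: mult_smult_distrib[of A n n A n] mult_smult_assoc_mat[of A n n A n])
  with AXA XAX A show ?thesis
    by (intro group_inverse_eqI) (auto simp: is_group_inverse_def)
qed

lemma same_pattern_group_inverse_if_cube_smult:
  fixes A :: "real mat"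
  assumes A: "A \<in> carrier_mat n n" and sym: "transpose_mat A = A" and cube: "A * A * A = s \<cdot>\<^sub>m A"
  shows "same_pattern n A (group_inverse n A)"
proof (cases "s = 0")
  case True
  then have "A * A * A = 0\<^sub>m n n" using cube A by (auto intro!: eq_matI)
  then have "A = 0\<^sub>m n n" by (rule sym_mat_cube_eq_0[OF A sym])
  then show ?thesis
    unfolding same_pattern_def group_inverse_of_cube_smult[OF A sym cube] by simp
next
  case False
  then show ?thesis
    unfolding same_pattern_def group_inverse_of_cube_smult[OF A sym cube] using A by simp
qed

definition star_mat :: "nat \<Rightarrow> nat \<Rightarrow> (nat \<Rightarrow> 'a :: comm_ring_1) \<Rightarrow> 'a mat" where
  "star_mat n c w = mat n n (\<lambda>(i, j). (if i = c then w j else 0) + (if j = c then w i else 0))"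

lemma star_mat_carrier [simp]: "star_mat n c w \<in> carrier_mat n n"
  and dim_star_mat [simp]: "dim_row (star_mat n c w) = n" "dim_col (star_mat n c w) = n"
  unfolding star_mat_def by auto

lemma index_star_mat [simp]:
  "i < n \<Longrightarrow> j < n \<Longrightarrow>
    star_mat n c w $$ (i, j) = (if i = c then w j else 0) + (if j = c then w i else 0)"
  unfolding star_mat_def by simp

lemma star_mat_square_index:
  assumes c: "c < n" "w c = 0" and i: "i < n" and j: "j < n"
  shows "(star_mat n c w * star_mat n c w) $$ (i, j)
    = (if i = c \<and> j = c then (\<Sum>k<n. w k * w k) else 0) + w i * w j"
  unfolding index_mult_mat_sum[OF star_mat_carrier star_mat_carrier i j]
  using c i j by (cases "i = c"; cases "j = c")
    (simp_all add: algebra_simps sum.distrib if_distrib if_distribR cong: if_cong)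

lemma star_mat_cube:
  assumes "c < n" "w c = 0"
  shows "star_mat n c w * star_mat n c w * star_mat n c w = (\<Sum>k<n. w k * w k) \<cdot>\<^sub>m star_mat n c w"
proof (rule eq_matI)
  fix i j assume "i < dim_row ((\<Sum>k<n. w k * w k) \<cdot>\<^sub>m star_mat n c w)"
    "j < dim_col ((\<Sum>k<n. w k * w k) \<cdot>\<^sub>m star_mat n c w)"
  then have i: "i < n" and j: "j < n" by auto
  let ?S = "star_mat n c w" and ?s = "\<Sum>k<n. w k * w k"
  have "(?S * ?S * ?S) $$ (i, j) = (\<Sum>k<n. (?S * ?S) $$ (i, k) * ?S $$ (k, j))"
    by (rule index_mult_mat_sum) (use i j in auto)
  also have "\<dots> = (\<Sum>k<n. ((if i = c \<and> k = c then ?s else 0) + w i * w k)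
      * ((if k = c then w j else 0) + (if j = c then w k else 0)))"
    using assms i j by (intro sum.cong) (simp_all add: star_mat_square_index del: index_mult_mat)
  also have "\<dots> = ((\<Sum>k<n. w k * w k) \<cdot>\<^sub>m star_mat n c w) $$ (i, j)"
    using assms i j by (cases "i = c"; cases "j = c")
      (simp_all add: algebra_simps sum.distrib if_distrib if_distribR sum_distrib_left cong: if_cong)
  finally show "(?S * ?S * ?S) $$ (i, j) = (?s \<cdot>\<^sub>m ?S) $$ (i, j)" .
qed auto

lemma adj_imp_less: "adj n A i j \<Longrightarrow> i < n \<and> j < n"
  unfolding adj_def by auto

lemma adj_irrefl: "adj n A i j \<Longrightarrow> i \<noteq> j"
  unfolding adj_def by auto

lemma is_cycle_iff:
  "is_cycle n A vs \<longleftrightarrow>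
     3 \<le> length vs \<and> distinct vs \<and> successively (adj n A) vs \<and> adj n A (last vs) (hd vs)"
  unfolding is_cycle_def successively_conv_nth by blast

context
  fixes n :: nat and A :: "real mat"
  assumes tree: "weighted_tree n A"
begin

lemma weighted_tree_carrier: "A \<in> carrier_mat n n"
  using tree unfolding weighted_tree_def by blast

lemma weighted_tree_transpose: "transpose_mat A = A"
  using tree weighted_tree_carrier unfolding weighted_tree_def by (intro eq_matI) auto

lemma weighted_tree_adj_sym: "adj n A i j \<Longrightarrow> adj n A j i"
  using tree unfolding weighted_tree_def adj_def by auto

lemma weighted_tree_adj_iff: "i < n \<Longrightarrow> j < n \<Longrightarrow> adj n A i j \<longleftrightarrow> A $$ (i, j) \<noteq> 0"
  using tree unfolding weighted_tree_def adj_def by auto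

lemma weighted_tree_no_cycle:
  assumes "3 \<le> length vs" "distinct vs" "successively (adj n A) vs" "adj n A (last vs) (hd vs)"
  shows False
  using tree assms unfolding weighted_tree_def graph_acyclic_def is_cycle_iff by blast

lemma weighted_tree_path_ends:
  assumes p: "adj n A a b" "adj n A b c" "adj n A c d" "a \<noteq> c" "b \<noteq> d"
  shows "a \<noteq> d" and "\<not> adj n A a d"
proof -
  show "a \<noteq> d"
  proof
    assume "a = d"
    then show False
      using weighted_tree_no_cycle[of "[a, b, c]"] p adj_irrefl by auto
  qed
  show "\<not> adj n A a d"
  proof
    assume "adj n A a d"
    then show False
      using weighted_tree_no_cycle[of "[a, b, c, d]"] p adj_irrefl weighted_tree_adj_sym by auto
  qed
qed

lemma weighted_tree_walk3_unique:
  assumes p: "adj n A a b" "adj n A b c" "adj n A c d" "a \<noteq> c" "b \<noteq> d"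
    and w: "adj n A a k" "adj n A k l" "adj n A l d"
  shows "k = b \<and> l = c"
proof (rule ccontr)
  assume ne: "\<not> (k = b \<and> l = c)"
  have ad: "a \<noteq> d" "\<not> adj n A a d" using weighted_tree_path_ends[OF p] by auto
  have irr: "a \<noteq> b" "b \<noteq> c" "c \<noteq> d" "a \<noteq> k" "k \<noteq> l" "l \<noteq> d"
    using p w adj_irrefl by blast+
  have rev: "adj n A b a" "adj n A c b" "adj n A d c" "adj n A k a" "adj n A l k" "adj n A d l"
    using p w weighted_tree_adj_sym by blast+
  consider "k = b" "l \<noteq> c" | "k \<noteq> b" "l = c" | "k = c" | "l = b" | "k \<notin> {b, c}" "l \<notin> {b, c}"
    using ne by blast
  then show False
  proof cases
    case 1
    show False
      by (rule weighted_tree_no_cycle[of "[b, c, d, l]"]) (use 1 p w rev irr in auto)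
  next
    case 2
    show False
      by (rule weighted_tree_no_cycle[of "[a, b, c, k]"]) (use 2 p w rev irr in auto)
  next
    case 3
    show False
      by (rule weighted_tree_no_cycle[of "[a, b, c]"]) (use 3 p w rev irr in auto)
  next
    case 4
    show False
      by (rule weighted_tree_no_cycle[of "[b, c, d]"]) (use 4 p w rev irr in auto)
  next
    case 5
    have "k \<noteq> d" "l \<noteq> a" using w ad by auto
    then have "distinct [a, b, c, d, l, k]" using 5 p(4,5) irr ad(1) by auto
    then show False
      by (rule weighted_tree_no_cycle[of "[a, b, c, d, l, k]", rotated]) (simp_all add: p rev)
  qed
qed

lemma weighted_tree_connected: "i < n \<Longrightarrow> j < n \<Longrightarrow> (adj n A)\<^sup>*\<^sup>* i j"
  using tree unfolding weighted_tree_def graph_connected_def by blast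

context
  assumes no_path3: "\<And>a b c d. adj n A a b \<Longrightarrow> adj n A b c \<Longrightarrow> adj n A c d \<Longrightarrow> a = c \<or> b = d"
begin

lemma leaf_edge_if_no_path3:
  assumes "adj n A x y"
  obtains p q where "adj n A p q" and "\<And>z. adj n A q z \<Longrightarrow> z = p"
proof (cases "\<exists>z. adj n A x z \<and> z \<noteq> y")
  case True
  then obtain z where zx: "adj n A z x" and "z \<noteq> y" using weighted_tree_adj_sym by blast
  then have "w = x" if "adj n A y w" for w using no_path3[OF zx assms that] by blast
  then show ?thesis by (rule that[OF assms])
next
  case False
  then have "z = y" if "adj n A x z" for z using that by blast
  then show ?thesis by (rule that[OF weighted_tree_adj_sym[OF assms]])
qed

lemma center_if_no_path3:
  assumes pq: "adj n A p q" and leaf: "\<And>z. adj n A q z \<Longrightarrow> z = p" and j: "j < n" "j \<noteq> p"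
  shows "adj n A p j"
proof -
  have "p < n" using adj_imp_less[OF pq] by simp
  have "j = p \<or> adj n A p j" if "(adj n A)\<^sup>*\<^sup>* p j" for j
    using that
  proof (induction rule: rtranclp_induct)
    case (step j k)
    then consider "j = p" | "j = q" | "adj n A p j" "j \<noteq> q" by blast
    then show ?case
    proof cases
      case 3
      then show ?thesis using no_path3[OF weighted_tree_adj_sym[OF pq] 3(1) step.hyps(2)] by blast
    qed (use step.hyps(2) leaf in auto)
  qed simp
  then show ?thesis using weighted_tree_connected[OF \<open>p < n\<close> j(1)] j(2) by blast
qed

lemma weighted_star_if_no_path3: "weighted_star n A"
proof (cases "n = 1")
  case True
  then show ?thesis using tree unfolding weighted_star_def by (intro conjI exI[of _ 0]) auto
next
  case False
  moreover have "1 \<le> n" using tree unfolding weighted_tree_def by blast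
  ultimately have "(adj n A)\<^sup>*\<^sup>* 0 1" using weighted_tree_connected by simp
  then obtain y where "adj n A 0 y" by (metis converse_rtranclpE zero_neq_one)
  then obtain p q where pq: "adj n A p q" and leaf: "\<And>z. adj n A q z \<Longrightarrow> z = p"
    by (rule leaf_edge_if_no_path3) blast
  have "p < n" using adj_imp_less[OF pq] by simp
  moreover have "\<forall>j<n. j \<noteq> p \<longrightarrow> adj n A p j" using center_if_no_path3[OF pq leaf] by blast
  ultimately show ?thesis using tree unfolding weighted_star_def by blast
qed

end

lemma weighted_tree_not_star_obtains_path3:
  assumes "\<not> weighted_star n A"
  obtains a b c d where "adj n A a b" "adj n A b c" "adj n A c d" "a \<noteq> c" "b \<noteq> d"
proof -
  have "\<exists>a b c d. adj n A a b \<and> adj n A b c \<and> adj n A c d \<and> a \<noteq> c \<and> b \<noteq> d"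
  proof (rule ccontr)
    assume "\<not> ?thesis"
    then have "weighted_star n A" by (intro weighted_star_if_no_path3) blast
    then show False using assms by simp
  qed
  then show thesis using that by blast
qed

lemma weighted_tree_eq_star_mat:
  assumes c: "c < n" and center: "\<And>j. j < n \<Longrightarrow> j \<noteq> c \<Longrightarrow> adj n A c j"
  shows "A = star_mat n c (\<lambda>i. A $$ (i, c))"
proof (rule eq_matI)
  fix i j assume "i < dim_row (star_mat n c (\<lambda>i. A $$ (i, c)))" "j < dim_col (star_mat n c (\<lambda>i. A $$ (i, c)))"
  then have i: "i < n" and j: "j < n" by auto
  have diag: "A $$ (c, c) = 0" and sym: "A $$ (c, j) = A $$ (j, c)"
    using tree c j unfolding weighted_tree_def by blast+
  have off_center: "A $$ (i, j) = 0" if "i \<noteq> c" "j \<noteq> c"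
  proof (rule ccontr)
    assume "A $$ (i, j) \<noteq> 0"
    then have ij: "adj n A i j" using weighted_tree_adj_iff[OF i j] by blast
    have "adj n A j c" using weighted_tree_adj_sym[OF center[OF j \<open>j \<noteq> c\<close>]] .
    then show False
      using weighted_tree_no_cycle[of "[c, i, j]"] center[OF i \<open>i \<noteq> c\<close>] ij that
        adj_irrefl[OF ij] by auto
  qed
  then show "A $$ (i, j) = star_mat n c (\<lambda>i. A $$ (i, c)) $$ (i, j)"
    using i j c diag sym off_center by (cases "i = c"; cases "j = c") auto
qed (use weighted_tree_carrier in auto)

lemma weighted_tree_center_cube:
  assumes c: "c < n" and center: "\<And>j. j < n \<Longrightarrow> j \<noteq> c \<Longrightarrow> adj n A c j"
  shows "A * A * A = (\<Sum>k<n. A $$ (k, c) * A $$ (k, c)) \<cdot>\<^sub>m A"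
proof -
  define w where "w i = A $$ (i, c)" for i
  have "w c = 0" using tree c unfolding weighted_tree_def w_def by blast
  have star: "A = star_mat n c w" unfolding w_def by (rule weighted_tree_eq_star_mat[OF c center])
  have "A * A * A = (\<Sum>k<n. w k * w k) \<cdot>\<^sub>m A"
    using star_mat_cube[of c n w, OF c \<open>w c = 0\<close>] by (simp only: star[symmetric])
  then show ?thesis unfolding w_def .
qed

lemma no_same_pattern_inner_inverse_of_path3:
  assumes p: "adj n A a b" "adj n A b c" "adj n A c d" "a \<noteq> c" "b \<noteq> d"
    and X: "X \<in> carrier_mat n n" and AXA: "A * X * A = A" and pattern: "same_pattern n A X"
  shows False
proof -
  have A: "A \<in> carrier_mat n n" by (rule weighted_tree_carrier)
  have lt: "a < n" "b < n" "c < n" "d < n" using p adj_imp_less by blast+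
  have nz_iff: "A $$ (k, l) \<noteq> 0 \<longleftrightarrow> adj n A k l" "X $$ (k, l) \<noteq> 0 \<longleftrightarrow> adj n A k l"
    if "k < n" "l < n" for k l
    using weighted_tree_adj_iff[OF that] pattern that unfolding same_pattern_def by auto
  have "(A * X * A) $$ (a, d) = (\<Sum>l<n. (A * X) $$ (a, l) * A $$ (l, d))"
    by (rule index_mult_mat_sum) (use A X lt in auto)
  also have "\<dots> = (\<Sum>l<n. (\<Sum>k<n. A $$ (a, k) * X $$ (k, l)) * A $$ (l, d))"
    using index_mult_mat_sum[OF A X \<open>a < n\<close>] by simp
  also have "\<dots> = (\<Sum>l<n. \<Sum>k<n. A $$ (a, k) * X $$ (k, l) * A $$ (l, d))"
    by (simp add: sum_distrib_right)
  also have "\<dots> = A $$ (a, b) * X $$ (b, c) * A $$ (c, d)"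
  proof (rule sum_sum_eq_single)
    fix k l assume kl: "k \<in> {..<n}" "l \<in> {..<n}" and "A $$ (a, k) * X $$ (k, l) * A $$ (l, d) \<noteq> 0"
    then have "A $$ (a, k) \<noteq> 0" "X $$ (k, l) \<noteq> 0" "A $$ (l, d) \<noteq> 0" by auto
    then have "adj n A a k" "adj n A k l" "adj n A l d" using nz_iff kl lt by simp_all
    then show "k = b \<and> l = c" by (rule weighted_tree_walk3_unique[OF p])
  qed (use lt in auto)
  moreover have "A $$ (a, b) \<noteq> 0" "X $$ (b, c) \<noteq> 0" "A $$ (c, d) \<noteq> 0"
    using nz_iff lt p by simp_all
  ultimately have "(A * X * A) $$ (a, d) \<noteq> 0" by simp
  moreover have "A $$ (a, d) = 0"
    using weighted_tree_path_ends(2)[OF p] nz_iff(1)[OF lt(1,4)] by blast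
  ultimately show False using AXA by simp
qed

end

theorem corollary2p13:
  fixes n :: nat and A :: "real mat"
  assumes "weighted_tree n A"
    and "det A = 0"
  shows "same_pattern n A (group_inverse n A) \<longleftrightarrow> weighted_star n A"
proof -
  note tree = assms(1)
  have A: "A \<in> carrier_mat n n" and sym: "transpose_mat A = A"
    using weighted_tree_carrier[OF tree] weighted_tree_transpose[OF tree] .
  have "is_group_inverse n A (group_inverse n A)"
    by (rule is_group_inverse_group_inverse_sym[OF A sym])
  then have G: "group_inverse n A \<in> carrier_mat n n" and AGA: "A * group_inverse n A * A = A"
    unfolding is_group_inverse_def by blast+
  have "weighted_star n A" if pattern: "same_pattern n A (group_inverse n A)"
  proof (rule ccontr)
    assume "\<not> weighted_star n A"
    then obtain a b c d where path: "adj n A a b" "adj n A b c" "adj n A c d" "a \<noteq> c" "b \<noteq> d"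
      by (rule weighted_tree_not_star_obtains_path3[OF tree])
    show False by (rule no_same_pattern_inner_inverse_of_path3[OF tree path G AGA pattern])
  qed
  moreover have "same_pattern n A (group_inverse n A)" if star: "weighted_star n A"
  proof -
    obtain c where c: "c < n" and center: "\<And>j. j < n \<Longrightarrow> j \<noteq> c \<Longrightarrow> adj n A c j"
      using star unfolding weighted_star_def by blast
    show ?thesis
      by (rule same_pattern_group_inverse_if_cube_smult[OF A sym weighted_tree_center_cube[OF tree c center]])
  qed
  ultimately show ?thesis by blast
qed

end
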